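(* Let $n\ge2$ and let $k$ be a finite field with $|k|>9$. For every subgroup $H$ of $\mathrm{GL}_n(k)$ containing $\mathrm{SL}_n(k)$ we have $H^1(H,\mathfrak{pgl}_n(k))=0$.
   Context: $\mathfrak{pgl}_n(k)=\mathfrak{gl}_n(k)/\mathfrak{c}(k)$, where $\mathfrak{c}(k)$ is the space of scalar matrices, with $H$ acting by conjugation (the adjoint action). *)

theory Defs
  imports "HOL-Analysis.Analysis"
begin

text \<open>Matrices over a field k indexed by a finite type 'n, i.e. M_n(k) with n = CARD('n).\<close>

definition GL :: "('a::field ^'n::finite^'n) set" where
  "GL = {A. invertible A}"

definition SL :: "('a::field ^'n::finite^'n) set" where
  "SL = {A. det A = 1}"

definition is_subgroup_GL :: "('a::field ^'n::finite^'n) set \<Rightarrow> bool" where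
  "is_subgroup_GL H \<longleftrightarrow> H \<subseteq> GL \<and> mat 1 \<in> H \<and>
     (\<forall>A\<in>H. \<forall>B\<in>H. A ** B \<in> H) \<and> (\<forall>A\<in>H. matrix_inv A \<in> H)"

text \<open>pgl_n(k) = gl_n(k) / scalar matrices: two matrices represent the same
  element of pgl_n(k) iff they differ by a scalar matrix.\<close>

definition pgl_eq :: "'a::field ^'n::finite^'n \<Rightarrow> 'a^'n^'n \<Rightarrow> bool" where
  "pgl_eq A B \<longleftrightarrow> (\<exists>c. A - B = mat c)"

text \<open>Adjoint (conjugation) action of g on gl_n(k); it preserves scalars,
  hence descends to pgl_n(k).\<close>

definition adj :: "'a::field ^'n::finite^'n \<Rightarrow> 'a^'n^'n \<Rightarrow> 'a^'n^'n" where
  "adj g X = g ** X ** matrix_inv g"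

text \<open>1-cocycles H \<rightarrow> pgl_n(k), represented by (arbitrary) lifts to gl_n(k).\<close>

definition pgl_cocycle :: "('a::field ^'n::finite^'n) set \<Rightarrow> ('a^'n^'n \<Rightarrow> 'a^'n^'n) \<Rightarrow> bool" where
  "pgl_cocycle H f \<longleftrightarrow>
     (\<forall>g\<in>H. \<forall>h\<in>H. pgl_eq (f (g ** h)) (f g + adj g (f h)))"

definition pgl_coboundary :: "('a::field ^'n::finite^'n) set \<Rightarrow> ('a^'n^'n \<Rightarrow> 'a^'n^'n) \<Rightarrow> bool" where
  "pgl_coboundary H f \<longleftrightarrow> (\<exists>X. \<forall>g\<in>H. pgl_eq (f g) (adj g X - X))"

definition H1_pgl_vanishes :: "('a::field ^'n::finite^'n) set \<Rightarrow> bool" where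
  "H1_pgl_vanishes H \<longleftrightarrow> (\<forall>f. pgl_cocycle H f \<longrightarrow> pgl_coboundary H f)"

end

theory Submission
  imports Defs "HOL-Computational_Algebra.Polynomial"
begin

text \<open>
  The argument needs only \<open>|k| > 7\<close> (and no bound on \<open>n\<close>). Starting from a cocycle \<open>f\<close>
  we subtract coboundaries until \<open>f\<close> vanishes in \<open>pgl\<^sub>n(k)\<close>:
  \<^item> Step 1: averaging over the diagonal torus, whose order \<open>(q-1)\<^sup>n\<close> is a unit in \<open>k\<close>,
    makes \<open>f\<close> vanish on the diagonal matrices of determinant one (\<open>torus_averaging\<close>).
  \<^item> Step 2: then the torus action forces \<open>f(x\<^sub>i\<^sub>j(s)) = b\<^sub>i\<^sub>j s E\<^sub>i\<^sub>j\<close> on every root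
    subgroup (locale \<open>root_pair\<close>, lemma \<open>root_form\<close>).
  \<^item> Step 3: commutator relations and Weyl elements give \<open>b\<^sub>i\<^sub>l = b\<^sub>i\<^sub>j + b\<^sub>j\<^sub>l\<close> and
    \<open>b\<^sub>j\<^sub>i = -b\<^sub>i\<^sub>j\<close>, so \<open>b\<^sub>i\<^sub>j = x\<^sub>j - x\<^sub>i\<close>, and the coboundary of \<open>diag(x)\<close> removes
    \<open>f\<close> on all transvections (\<open>root_normalization\<close>).
  \<^item> Step 4: transvections and the determinant-one torus generate \<open>SL\<^sub>n(k)\<close> (Gaussian
    elimination, \<open>SL_generated\<close>), so \<open>f\<close> vanishes on \<open>SL\<^sub>n(k)\<close>.
  \<^item> Step 5: as \<open>SL\<^sub>n(k)\<close> is normal, each value \<open>f(h)\<close>, \<open>h \<in> H\<close>, is then fixed by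
    \<open>SL\<^sub>n(k)\<close>, and \<open>pgl\<^sub>n(k)\<close> has no nonzero \<open>SL\<^sub>n(k)\<close>-invariants (\<open>SL_invariant_zero\<close>).
\<close>

definition diag_mat :: "('n::finite \<Rightarrow> 'a::field) \<Rightarrow> 'a^'n^'n" where
  "diag_mat x = (\<chi> a b. if a = b then x a else 0)"

definition unit_mat :: "'n::finite \<Rightarrow> 'n \<Rightarrow> 'a::field \<Rightarrow> 'a^'n^'n" where
  "unit_mat i j s = (\<chi> a b. if a = i \<and> b = j then s else 0)"

definition transv :: "'n::finite \<Rightarrow> 'n \<Rightarrow> 'a::field \<Rightarrow> 'a^'n^'n" where
  "transv i j s = mat 1 + unit_mat i j s"

lemma diag_mat_entry [simp]: "diag_mat x $ a $ b = (if a = b then x a else 0)"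
  by (simp add: diag_mat_def)

lemma unit_mat_entry [simp]: "unit_mat i j s $ a $ b = (if a = i \<and> b = j then s else 0)"
  by (simp add: unit_mat_def)

lemma mat_entry [simp]: "(mat c :: 'a::zero^'n^'n) $ a $ b = (if a = b then c else 0)"
  by (simp add: mat_def)

lemma transv_entry: "transv i j s $ a $ b = (if a = b then 1 else 0) + (if a = i \<and> b = j then s else 0)"
  by (simp add: transv_def)

lemma mult_entry: "(A ** B) $ a $ b = (\<Sum>k\<in>UNIV. A$a$k * B$k$b)"
  by (simp add: matrix_matrix_mult_def)

lemma unit_mat_mult_left: "(unit_mat i j s ** A) $ a $ b = (if a = i then s * A$j$b else 0)"
proof -
  have "(\<Sum>k\<in>UNIV. unit_mat i j s $a$k * A$k$b) = (\<Sum>k\<in>UNIV. if k = j then (if a = i then s * A$j$b else 0) else 0)"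
    by (rule sum.cong) auto
  then show ?thesis by (simp add: mult_entry)
qed

lemma unit_mat_mult_right: "(A ** unit_mat i j s) $ a $ b = (if b = j then A$a$i * s else 0)"
proof -
  have "(\<Sum>k\<in>UNIV. A$a$k * unit_mat i j s $k$b) = (\<Sum>k\<in>UNIV. if k = i then (if b = j then A$a$i * s else 0) else 0)"
    by (rule sum.cong) auto
  then show ?thesis by (simp add: mult_entry)
qed

lemma diag_mat_mult_left: "(diag_mat x ** A) $ a $ b = x a * A$a$b"
proof -
  have "(\<Sum>k\<in>UNIV. diag_mat x $a$k * A$k$b) = (\<Sum>k\<in>UNIV. if k = a then x a * A$a$b else 0)"
    by (rule sum.cong) auto
  then show ?thesis by (simp add: mult_entry)
qed

lemma diag_mat_mult_right: "(A ** diag_mat x) $ a $ b = A$a$b * x b"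
proof -
  have "(\<Sum>k\<in>UNIV. A$a$k * diag_mat x $k$b) = (\<Sum>k\<in>UNIV. if k = b then A$a$b * x b else 0)"
    by (rule sum.cong) auto
  then show ?thesis by (simp add: mult_entry)
qed

lemma mat_eq_diag_mat: "mat c = diag_mat (\<lambda>_. c)"
  by (simp add: vec_eq_iff)

lemma scalar_mult_left: "(mat c ** (A :: 'a::field^'n::finite^'n)) $ a $ b = c * A$a$b"
  by (simp add: mat_eq_diag_mat diag_mat_mult_left)

lemma matrix_add_rdistrib: "(A + B) ** C = A ** C + B ** (C :: 'a::semiring_1^_^_)"
  by (simp add: vec_eq_iff mult_entry distrib_right sum.distrib)

lemma matrix_diff_rdistrib: "(A - B) ** C = A ** C - B ** (C :: 'a::ring_1^_^_)"
  by (simp add: vec_eq_iff mult_entry left_diff_distrib sum_subtractf)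

lemma matrix_diff_ldistrib: "C ** (A - B) = C ** A - C ** (B :: 'a::ring_1^_^_)"
  by (simp add: vec_eq_iff mult_entry right_diff_distrib sum_subtractf)

lemma unit_mat_mult: "unit_mat i j s ** unit_mat k l r = (if j = k then unit_mat i l (s * r) else 0)"
  by (auto simp: vec_eq_iff unit_mat_mult_left)

lemma diag_mat_mult: "diag_mat x ** diag_mat y = diag_mat (\<lambda>a. x a * y a)"
  by (simp add: vec_eq_iff diag_mat_mult_left)

lemma diag_mat_one: "diag_mat (\<lambda>_. 1) = mat 1"
  by (simp add: vec_eq_iff)

lemma det_diag_mat: "det (diag_mat x) = prod x UNIV"
  by (subst det_diagonal) auto

lemma scalar_mult_commute: "mat c ** A = A ** (mat c :: 'a::field^'n::finite^'n)"
  by (simp add: vec_eq_iff mat_eq_diag_mat diag_mat_mult_left diag_mat_mult_right mult.commute)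

lemma transv_mult_left_entry:
  "(transv i j s ** A) $ a $ b = A$a$b + (if a = i then s * A$j$b else 0)"
proof -
  have "transv i j s ** A = A + unit_mat i j s ** A"
    by (simp add: transv_def matrix_add_rdistrib)
  then show ?thesis by (simp add: unit_mat_mult_left)
qed

lemma transv_mult: "i \<noteq> j \<Longrightarrow> transv i j s ** transv i j r = transv i j (s + r)"
  by (auto simp: vec_eq_iff transv_mult_left_entry transv_entry)

lemma transv_zero: "transv i j 0 = mat 1"
  by (simp add: vec_eq_iff transv_def)

lemma det_transv: "i \<noteq> j \<Longrightarrow> det (transv i j s :: 'a::field^'n::finite^'n) = 1"
proof -
  assume ij: "i \<noteq> j"
  have "transv i j s = (\<chi> k. if k = i then row i (mat 1) + s *s row j (mat 1) else row k (mat 1 :: 'a^'n^'n))"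
    by (auto simp: vec_eq_iff transv_def row_def)
  then show ?thesis using det_row_operation[OF ij, of "mat 1" s] by simp
qed

lemma transv_in_SL: "i \<noteq> j \<Longrightarrow> transv i j s \<in> SL"
  by (simp add: SL_def det_transv)

lemma diag_mat_in_SL: "diag_mat x \<in> SL \<longleftrightarrow> prod x UNIV = 1"
  by (simp add: SL_def det_diag_mat)

lemma prod_one_nonzero: "prod (x :: 'n::finite \<Rightarrow> 'a::field) UNIV = 1 \<Longrightarrow> x a \<noteq> 0"
  using prod_zero_iff[of UNIV x] by auto

lemma matrix_inv_props:
  fixes A :: "'a::field^'n::finite^'n"
  assumes "invertible A"
  shows "A ** matrix_inv A = mat 1" "matrix_inv A ** A = mat 1"
proof -
  have "\<exists>A'. A ** A' = mat 1 \<and> A' ** A = mat 1" using assms by (simp add: invertible_def)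
  then have "A ** matrix_inv A = mat 1 \<and> matrix_inv A ** A = mat 1"
    unfolding matrix_inv_def by (rule someI_ex)
  then show "A ** matrix_inv A = mat 1" "matrix_inv A ** A = mat 1" by auto
qed

lemma matrix_inv_unique:
  fixes A B :: "'a::field^'n::finite^'n"
  assumes "A ** B = mat 1"
  shows "matrix_inv A = B" "invertible A"
proof -
  have BA: "B ** A = mat 1" using assms matrix_left_right_inverse by blast
  show inv: "invertible A" using assms BA invertible_def by blast
  have "matrix_inv A = matrix_inv A ** (A ** B)" by (simp add: assms)
  also have "\<dots> = B" by (simp add: matrix_mul_assoc matrix_inv_props[OF inv])
  finally show "matrix_inv A = B" .
qed

lemma matrix_inv_one: "matrix_inv (mat 1 :: 'a::field^'n::finite^'n) = mat 1"
  by (rule matrix_inv_unique) simp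

lemma matrix_inv_mult:
  fixes A B :: "'a::field^'n::finite^'n"
  assumes "invertible A" "invertible B"
  shows "matrix_inv (A ** B) = matrix_inv B ** matrix_inv A"
proof (rule matrix_inv_unique)
  have "A ** B ** (matrix_inv B ** matrix_inv A) = A ** (B ** matrix_inv B) ** matrix_inv A"
    by (simp add: matrix_mul_assoc)
  then show "A ** B ** (matrix_inv B ** matrix_inv A) = mat 1"
    by (simp add: matrix_inv_props assms)
qed

lemma matrix_inv_inv:
  fixes A :: "'a::field^'n::finite^'n"
  assumes "invertible A"
  shows "matrix_inv (matrix_inv A) = A" "invertible (matrix_inv A)"
  using matrix_inv_unique[OF matrix_inv_props(2)[OF assms]] by auto

lemma matrix_inv_transv: "i \<noteq> j \<Longrightarrow> matrix_inv (transv i j s) = transv i j (- s)"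
  by (rule matrix_inv_unique) (simp add: transv_mult transv_zero)

lemma invertible_transv: "i \<noteq> j \<Longrightarrow> invertible (transv i j s :: 'a::field^'n::finite^'n)"
  by (simp add: invertible_det_nz det_transv)

lemma matrix_inv_diag_mat: "(\<And>a. x a \<noteq> 0) \<Longrightarrow> matrix_inv (diag_mat x) = diag_mat (\<lambda>a. inverse (x a))"
  by (rule matrix_inv_unique) (simp add: diag_mat_mult diag_mat_one)

lemma invertible_diag_mat: "(\<And>a. x a \<noteq> 0) \<Longrightarrow> invertible (diag_mat x)"
  by (simp add: invertible_det_nz det_diag_mat)

subsection \<open>The adjoint action and equality in \<open>pgl\<^sub>n(k)\<close>\<close>

lemma adj_mat1: "adj (mat 1 :: 'a::field^'n::finite^'n) X = X"
  by (simp add: adj_def matrix_inv_one)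

lemma adj_mult:
  fixes g h :: "'a::field^'n::finite^'n"
  assumes "invertible g" "invertible h"
  shows "adj (g ** h) X = adj g (adj h X)"
  by (simp add: adj_def matrix_inv_mult assms matrix_mul_assoc)

lemma adj_add: "adj g (X + Y) = adj g X + adj g (Y :: 'a::field^'n::finite^'n)"
  by (simp add: adj_def matrix_add_ldistrib matrix_add_rdistrib)

lemma adj_diff: "adj g (X - Y) = adj g X - adj g (Y :: 'a::field^'n::finite^'n)"
  by (simp add: adj_def matrix_diff_ldistrib matrix_diff_rdistrib)

lemma adj_zero: "adj g (0 :: 'a::field^'n::finite^'n) = 0"
  by (simp add: adj_def)

lemma adj_uminus: "adj g (- X) = - adj g (X :: 'a::field^'n::finite^'n)"
  using adj_diff[of g 0 X] by (simp add: adj_zero)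

lemma adj_sum: "adj g (\<Sum>x\<in>S. F x) = (\<Sum>x\<in>S. adj g (F x :: 'a::field^'n::finite^'n))"
  by (rule additive.sum) (unfold_locales, rule adj_add)

lemma adj_scalar_mult: "adj g (mat c ** X) = mat c ** adj g (X :: 'a::field^'n::finite^'n)"
  by (simp add: adj_def matrix_mul_assoc scalar_mult_commute[of c g])

lemma adj_mat:
  fixes g :: "'a::field^'n::finite^'n"
  assumes "invertible g"
  shows "adj g (mat c) = mat c"
  using adj_scalar_mult[of g c "mat 1"] by (simp add: adj_def matrix_inv_props assms)

lemma adj_transv_entry:
  assumes "i \<noteq> j"
  shows "adj (transv i j s) Y $ a $ b = Y$a$b + (if a = i then s * Y$j$b else 0)
     - (if b = j then Y$a$i * s else 0) - (if a = i \<and> b = j then s * s * Y$j$i else 0)"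
proof -
  have "adj (transv i j s) Y = (mat 1 + unit_mat i j s) ** Y ** (mat 1 + unit_mat i j (-s))"
    by (simp add: adj_def matrix_inv_transv assms) (simp add: transv_def)
  also have "\<dots> = Y + unit_mat i j s ** Y + Y ** unit_mat i j (-s) + unit_mat i j s ** Y ** unit_mat i j (-s)"
    by (simp add: matrix_add_ldistrib matrix_add_rdistrib algebra_simps)
  finally show ?thesis
    by (simp add: unit_mat_mult_left unit_mat_mult_right assms)
qed

lemma adj_diag_mat_entry:
  assumes "\<And>a. x a \<noteq> 0"
  shows "adj (diag_mat x) Y $ a $ b = x a * Y$a$b * inverse (x b)"
  by (simp add: adj_def matrix_inv_diag_mat assms diag_mat_mult_left diag_mat_mult_right)

lemma pgl_eq_iff:
  "pgl_eq A B \<longleftrightarrow> (\<forall>a b. a \<noteq> b \<longrightarrow> A$a$b = B$a$b) \<and>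
     (\<forall>a b. A$a$a - B$a$a = A$b$b - (B :: 'a::field^'n::finite^'n)$b$b)"
proof
  assume "pgl_eq A B"
  then obtain c where "A - B = mat c" by (auto simp: pgl_eq_def)
  then have "(A - B)$a$b = (if a = b then c else 0)" for a b by simp
  then show "(\<forall>a b. a \<noteq> b \<longrightarrow> A$a$b = B$a$b) \<and> (\<forall>a b. A$a$a - B$a$a = A$b$b - B$b$b)"
    by (metis vector_minus_component right_minus_eq)
next
  assume A: "(\<forall>a b. a \<noteq> b \<longrightarrow> A$a$b = B$a$b) \<and> (\<forall>a b. A$a$a - B$a$a = A$b$b - B$b$b)"
  fix a0 :: 'n
  have "A - B = mat (A$a0$a0 - B$a0$a0)" using A by (auto simp: vec_eq_iff)
  then show "pgl_eq A B" by (auto simp: pgl_eq_def)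
qed

lemma pgl_eq_offdiag: "pgl_eq A B \<Longrightarrow> a \<noteq> b \<Longrightarrow> A$a$b = (B :: 'a::field^'n::finite^'n)$a$b"
  by (simp add: pgl_eq_iff)

lemma pgl_eq_diag: "pgl_eq A B \<Longrightarrow> A$a$a - B$a$a = A$b$b - (B :: 'a::field^'n::finite^'n)$b$b"
  by (simp add: pgl_eq_iff)

lemma pgl_eq_refl [simp]: "pgl_eq A (A :: 'a::field^'n::finite^'n)"
  by (simp add: pgl_eq_iff)

lemma mat_add_eq: "mat c + mat d = (mat (c + d) :: 'a::field^'n::finite^'n)"
  by (simp add: vec_eq_iff)

lemma mat_diff_eq: "mat c - mat d = (mat (c - d) :: 'a::field^'n::finite^'n)"
  by (simp add: vec_eq_iff)

lemma pgl_eq_sym: "pgl_eq A B \<Longrightarrow> pgl_eq B (A :: 'a::field^'n::finite^'n)"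
  unfolding pgl_eq_def by (metis minus_diff_eq mat_diff_eq diff_0 mat_0)

lemma pgl_eq_trans [trans]: "pgl_eq A B \<Longrightarrow> pgl_eq B C \<Longrightarrow> pgl_eq A (C :: 'a::field^'n::finite^'n)"
proof -
  assume "pgl_eq A B" "pgl_eq B C"
  then obtain c d where "A - B = mat c" "B - C = mat d" by (auto simp: pgl_eq_def)
  moreover have "A - C = (A - B) + (B - C)" by simp
  ultimately have "A - C = mat (c + d)" by (simp add: mat_add_eq)
  then show ?thesis by (auto simp: pgl_eq_def)
qed

lemma pgl_eq_add: "pgl_eq A B \<Longrightarrow> pgl_eq C D \<Longrightarrow> pgl_eq (A + C) (B + (D :: 'a::field^'n::finite^'n))"
  unfolding pgl_eq_def by (metis add_diff_add mat_add_eq)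

lemma pgl_eq_diff: "pgl_eq A B \<Longrightarrow> pgl_eq C D \<Longrightarrow> pgl_eq (A - C) (B - (D :: 'a::field^'n::finite^'n))"
proof -
  assume "pgl_eq A B" "pgl_eq C D"
  then obtain c d where "A - B = mat c" "C - D = mat d" by (auto simp: pgl_eq_def)
  moreover have "(A - C) - (B - D) = (A - B) - (C - D)" by (simp add: algebra_simps)
  ultimately have "(A - C) - (B - D) = mat (c - d)" by (simp add: mat_diff_eq)
  then show ?thesis by (auto simp: pgl_eq_def)
qed

lemma pgl_eq_scalar_mult: "pgl_eq A B \<Longrightarrow> pgl_eq (mat c ** A) (mat c ** (B :: 'a::field^'n::finite^'n))"
proof -
  assume "pgl_eq A B"
  then obtain d where "A - B = mat d" by (auto simp: pgl_eq_def)
  then have "mat c ** A - mat c ** B = mat (c * d)"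
    by (simp add: matrix_diff_ldistrib[symmetric] vec_eq_iff scalar_mult_left)
  then show ?thesis by (auto simp: pgl_eq_def)
qed

lemma pgl_eq_adj: "invertible g \<Longrightarrow> pgl_eq A B \<Longrightarrow> pgl_eq (adj g A) (adj g (B :: 'a::field^'n::finite^'n))"
  unfolding pgl_eq_def by (metis adj_diff adj_mat)

lemma pgl_eq_sum: "(\<And>x. x \<in> S \<Longrightarrow> pgl_eq (F x) (G x)) \<Longrightarrow>
   pgl_eq (\<Sum>x\<in>S. F x) (\<Sum>x\<in>S. G x :: 'a::field^'n::finite^'n)"
  by (induction S rule: infinite_finite_induct) (auto intro: pgl_eq_add)

lemma subgroup_invertible: "is_subgroup_GL H \<Longrightarrow> g \<in> H \<Longrightarrow> invertible g"
  by (auto simp: is_subgroup_GL_def GL_def)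

lemma subgroup_mult: "is_subgroup_GL H \<Longrightarrow> g \<in> H \<Longrightarrow> h \<in> H \<Longrightarrow> g ** h \<in> H"
  by (auto simp: is_subgroup_GL_def)

lemma subgroup_inv: "is_subgroup_GL H \<Longrightarrow> g \<in> H \<Longrightarrow> matrix_inv g \<in> H"
  by (auto simp: is_subgroup_GL_def)

lemma subgroup_one: "is_subgroup_GL H \<Longrightarrow> mat 1 \<in> H"
  by (auto simp: is_subgroup_GL_def)

lemma cocycle_mult: "pgl_cocycle H f \<Longrightarrow> g \<in> H \<Longrightarrow> h \<in> H \<Longrightarrow> pgl_eq (f (g ** h)) (f g + adj g (f h))"
  by (simp add: pgl_cocycle_def)

lemma cocycle_one:
  fixes f :: "'a::field^'n::finite^'n \<Rightarrow> 'a^'n^'n"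
  assumes "is_subgroup_GL H" "pgl_cocycle H f"
  shows "pgl_eq (f (mat 1)) 0"
proof -
  have "pgl_eq (f (mat 1)) (f (mat 1) + f (mat 1))"
    using cocycle_mult[OF assms(2) subgroup_one[OF assms(1)] subgroup_one[OF assms(1)]] by (simp add: adj_mat1)
  from pgl_eq_diff[OF this pgl_eq_refl[of "f (mat 1)"]] have "pgl_eq 0 (f (mat 1))" by simp
  then show ?thesis by (rule pgl_eq_sym)
qed

lemma cocycle_inv:
  fixes f :: "'a::field^'n::finite^'n \<Rightarrow> 'a^'n^'n"
  assumes H: "is_subgroup_GL H" and f: "pgl_cocycle H f" and g: "g \<in> H"
  shows "pgl_eq (f (matrix_inv g)) (- adj (matrix_inv g) (f g))"
proof -
  have "pgl_eq (f (matrix_inv g ** g)) (f (matrix_inv g) + adj (matrix_inv g) (f g))"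
    using cocycle_mult[OF f subgroup_inv[OF H g] g] .
  then have "pgl_eq (f (matrix_inv g) + adj (matrix_inv g) (f g)) (f (mat 1))"
    by (simp add: matrix_inv_props(2) subgroup_invertible[OF H g] pgl_eq_sym)
  then have "pgl_eq (f (matrix_inv g) + adj (matrix_inv g) (f g)) 0"
    using cocycle_one[OF H f] by (rule pgl_eq_trans)
  from pgl_eq_diff[OF this pgl_eq_refl[of "adj (matrix_inv g) (f g)"]] show ?thesis by simp
qed

lemma cocycle_conj:
  fixes f :: "'a::field^'n::finite^'n \<Rightarrow> 'a^'n^'n"
  assumes H: "is_subgroup_GL H" and f: "pgl_cocycle H f" and g: "g \<in> H" and u: "u \<in> H"
  shows "pgl_eq (f (g ** u ** matrix_inv g)) (f g + adj g (f u) - adj (g ** u ** matrix_inv g) (f g))"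
proof -
  have ig: "invertible g" "invertible u" using subgroup_invertible H g u by blast+
  have igu: "invertible (g ** u)" using invertible_mult[OF ig] .
  have C: "pgl_eq (f (g ** u ** matrix_inv g)) (f (g ** u) + adj (g ** u) (f (matrix_inv g)))"
    using cocycle_mult[OF f subgroup_mult[OF H g u] subgroup_inv[OF H g]] .
  have A: "pgl_eq (f (g ** u)) (f g + adj g (f u))" using cocycle_mult[OF f g u] .
  have B: "pgl_eq (adj (g ** u) (f (matrix_inv g))) (adj (g ** u) (- adj (matrix_inv g) (f g)))"
    using pgl_eq_adj[OF igu cocycle_inv[OF H f g]] .
  have D: "adj (g ** u) (- adj (matrix_inv g) (f g)) = - adj (g ** u ** matrix_inv g) (f g)"
    by (simp only: adj_uminus adj_mult[OF igu matrix_inv_inv(2)[OF ig(1)]])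
  show ?thesis
    using pgl_eq_trans[OF C pgl_eq_add[OF A B]] unfolding D by simp
qed

text \<open>Subtracting the coboundary of \<open>Y\<close> from a cocycle: \<open>f\<close> is a coboundary
  iff some such shift of \<open>f\<close> vanishes in \<open>pgl\<^sub>n(k)\<close>.\<close>
definition cob_shift :: "('a::field^'n::finite^'n \<Rightarrow> 'a^'n^'n) \<Rightarrow> 'a^'n^'n \<Rightarrow> 'a^'n^'n \<Rightarrow> 'a^'n^'n" where
  "cob_shift f Y g = f g - (adj g Y - Y)"

lemma cob_shift_cocycle:
  fixes f :: "'a::field^'n::finite^'n \<Rightarrow> 'a^'n^'n"
  assumes H: "is_subgroup_GL H" and f: "pgl_cocycle H f"
  shows "pgl_cocycle H (cob_shift f Y)"
  unfolding pgl_cocycle_def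
proof (intro ballI)
  fix g h assume g: "g \<in> H" and h: "h \<in> H"
  have ig: "invertible g" "invertible h" using subgroup_invertible H g h by blast+
  have e: "cob_shift f Y g + adj g (cob_shift f Y h) = (f g + adj g (f h)) - (adj (g ** h) Y - Y)"
    by (simp add: cob_shift_def adj_diff adj_add adj_mult[OF ig] algebra_simps)
  show "pgl_eq (cob_shift f Y (g ** h)) (cob_shift f Y g + adj g (cob_shift f Y h))"
    unfolding e unfolding cob_shift_def by (rule pgl_eq_diff[OF cocycle_mult[OF f g h] pgl_eq_refl])
qed

lemma cob_shift_cob_shift: "cob_shift (cob_shift f Y) Z = cob_shift f (Y + Z)"
  by (simp add: cob_shift_def fun_eq_iff adj_add algebra_simps)

lemma cob_shift_trivial_imp_coboundary:
  assumes "\<forall>g\<in>H. pgl_eq (cob_shift f Y g) 0"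
  shows "pgl_coboundary H f"
  unfolding pgl_coboundary_def
proof (intro exI ballI)
  fix g assume "g \<in> H"
  then have "pgl_eq (cob_shift f Y g + (adj g Y - Y)) (0 + (adj g Y - Y))"
    using assms by (intro pgl_eq_add) auto
  then show "pgl_eq (f g) (adj g Y - Y)" by (simp add: cob_shift_def)
qed

subsection \<open>Finite fields\<close>

lemma card_field_eq_zero: "of_nat CARD('k::{field,finite}) = (0::'k)"
proof -
  have "(\<Sum>x\<in>UNIV. x) = (\<Sum>x\<in>UNIV. (x + 1::'k))"
    by (rule sum.reindex_bij_witness[of _ "\<lambda>x. x + 1" "\<lambda>x. x - 1"]) auto
  also have "\<dots> = (\<Sum>x\<in>UNIV. x) + of_nat CARD('k)"
    by (simp add: sum.distrib)
  finally show ?thesis by simp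
qed

text \<open>A polynomial of degree \<open>m\<close> has at most \<open>m\<close> roots, so when \<open>|k| > m + 1\<close>
  some nonzero element of \<open>k\<close> is not an \<open>m\<close>-th root of unity.\<close>
lemma exists_non_root_of_unity:
  assumes "m \<ge> 1" "m + 1 < CARD('k::{field,finite})"
  shows "\<exists>c::'k. c \<noteq> 0 \<and> c ^ m \<noteq> 1"
proof -
  let ?p = "monom (1::'k) m + [:-1:]"
  have dp: "degree ?p = m" using assms(1) by (subst degree_add_eq_left) (simp_all add: degree_monom_eq)
  then have "?p \<noteq> 0" using assms(1) by auto
  then have "card {x. poly ?p x = 0} \<le> m" using card_poly_roots_bound dp by metis
  moreover have "{x. poly ?p x = 0} = {x::'k. x ^ m = 1}" by (simp add: poly_monom)
  ultimately have "card (insert 0 {x::'k. x ^ m = 1}) \<le> m + 1"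
    by (metis le_SucI not_less_eq_eq card_insert_if finite Suc_eq_plus1)
  then have "insert 0 {x::'k. x ^ m = 1} \<noteq> UNIV" using assms(2) by auto
  then show ?thesis by auto
qed

text \<open>In characteristic 2 squaring is injective, hence surjective on a finite field.\<close>
lemma char2_square_surj:
  assumes "(2::'k::{field,finite}) = 0"
  shows "\<exists>u::'k. u * u = z"
proof -
  have "inj (\<lambda>u::'k. u * u)"
  proof (rule injI)
    fix u v :: 'k assume h: "u * u = v * v"
    have "(u - v) * (u - v) = u * u + v * v - 2 * u * v" by (simp add: algebra_simps)
    also have "\<dots> = 2 * (u * u - u * v)" using h by (simp add: algebra_simps)
    also have "\<dots> = 0" using assms by simp
    finally show "u = v" by simp
  qed
  then have "surj (\<lambda>u::'k. u * u)" using finite_UNIV_inj_surj[of "\<lambda>u::'k. u * u"] by simp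
  then show ?thesis by (metis surjD)
qed

text \<open>Every element of a finite field is a difference of two squares (or a
  square in characteristic 2), so an additive map which is homogeneous with
  respect to squares is linear.\<close>
lemma additive_square_homogeneous_linear:
  fixes g :: "'k::{field,finite} \<Rightarrow> 'k"
  assumes add: "Modules.additive g" and hom: "\<And>c s. c \<noteq> 0 \<Longrightarrow> g (c * c * s) = c * c * g s"
  shows "g s = s * g 1"
proof -
  have hom': "g (c * c * t) = c * c * g t" for c t
    using hom[of c t] Modules.additive.zero[OF add] by (cases "c = 0") auto
  show ?thesis
  proof (cases "(2::'k) = 0")
    case True
    then obtain u where "u * u = s" using char2_square_surj by blast
    then show ?thesis using hom'[of u 1] by simp
  next
    case False
    define u v where "u = (s + 1) / 2" and "v = (s - 1) / 2"
    have "u + v = (2 * s) / 2" unfolding u_def v_def add_divide_distrib[symmetric] by simp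
    then have sum: "u + v = s" using False by simp
    have "u - v = 2 / 2" unfolding u_def v_def diff_divide_distrib[symmetric] by simp
    then have dif: "u - v = 1" using False by simp
    have "u * u * 1 - v * v * 1 = (u + v) * (u - v)" by (simp add: algebra_simps)
    then have sq: "s = u * u * 1 - v * v * 1" using sum dif by simp
    have "g s = g (u * u * 1) - g (v * v * 1)" by (subst sq, rule Modules.additive.diff[OF add])
    also have "\<dots> = (u * u * 1 - v * v * 1) * g 1" by (simp only: hom') (simp add: algebra_simps)
    finally show ?thesis using sq by simp
  qed
qed

lemma additive_square_invariant_zero:
  fixes g :: "'k::{field,finite} \<Rightarrow> 'k"
  assumes add: "Modules.additive g" and inv: "\<And>c s. c \<noteq> 0 \<Longrightarrow> g (c * c * s) = g s"
    and card: "CARD('k) > 3"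
  shows "g s = 0"
proof -
  obtain c :: 'k where c: "c \<noteq> 0" "c ^ 2 \<noteq> 1" using exists_non_root_of_unity[of 2] card by auto
  have d: "c * c - 1 \<noteq> 0" using c by (simp add: power2_eq_square)
  have "g ((c * c - 1) * t) = 0" for t
    using inv[OF c(1), of t] Modules.additive.diff[OF add, of "c * c * t" t] by (simp add: algebra_simps)
  from this[of "s / (c * c - 1)"] show ?thesis using d by simp
qed

lemma torus_weight_zero:
  fixes c g :: "'a::field"
  assumes c: "c \<noteq> 0" "c ^ (m + 2) \<noteq> 1" and eq: "c ^ m * g = inverse c * g * inverse c"
  shows "g = 0"
proof -
  have "c ^ (m + 2) * g = c * c * (c ^ m * g)" by (simp add: power_add power2_eq_square ac_simps)
  also have "\<dots> = c * c * (inverse c * g * inverse c)" by (simp only: eq)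
  also have "\<dots> = g" using c(1) by (simp add: field_simps)
  finally have "(c ^ (m + 2) - 1) * g = 0" by (simp add: left_diff_distrib)
  then show ?thesis by (metis c(2) mult_eq_0_iff right_minus_eq)
qed

subsection \<open>Step 1: the torus\<close>

lemma prod_if_point:
  assumes "finite A"
  shows "prod (\<lambda>b. if b = a then u else g b) A = (if a \<in> A then u * prod g (A - {a}) else prod g A)"
proof (cases "a \<in> A")
  case True
  have "prod (\<lambda>b. if b = a then u else g b) A = u * prod (\<lambda>b. if b = a then u else g b) (A - {a})"
    using prod.remove[OF assms True, of "\<lambda>b. if b = a then u else g b"] by simp
  also have "prod (\<lambda>b. if b = a then u else g b) (A - {a}) = prod g (A - {a})"
    by (rule prod.cong) auto
  finally show ?thesis using True by simp
next
  case False
  then show ?thesis by (auto intro: prod.cong)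
qed

definition torus_pair :: "'n::finite \<Rightarrow> 'n \<Rightarrow> 'k::field \<Rightarrow> 'n \<Rightarrow> 'k" where
  "torus_pair i j c = (\<lambda>_. 1)(i := c, j := inverse c)"

lemma prod_torus_pair: "i \<noteq> j \<Longrightarrow> c \<noteq> 0 \<Longrightarrow> prod (torus_pair i j c) UNIV = 1"
  by (simp add: torus_pair_def prod_if_point)

lemma torus_pair_apply:
  "i \<noteq> j \<Longrightarrow> torus_pair i j c i = c" "torus_pair i j c j = inverse c"
  "a \<noteq> i \<Longrightarrow> a \<noteq> j \<Longrightarrow> torus_pair i j c a = 1"
  by (simp_all add: torus_pair_def)

lemma card_nonzero_vectors:
  "of_nat (card {x :: 'n::finite \<Rightarrow> 'k::{field,finite}. \<forall>a. x a \<noteq> 0}) = ((-1)::'k) ^ CARD('n)"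
proof -
  have "{x :: 'n \<Rightarrow> 'k. \<forall>a. x a \<noteq> 0} = PiE UNIV (\<lambda>_. UNIV - {0})"
    by (auto simp: PiE_UNIV_domain)
  then have "card {x :: 'n \<Rightarrow> 'k. \<forall>a. x a \<noteq> 0} = (CARD('k) - 1) ^ CARD('n)"
    by (simp add: card_PiE card_Diff_singleton)
  moreover have "of_nat (CARD('k) - 1) = (-1::'k)"
    using card_field_eq_zero[where 'k='k] by (simp add: of_nat_diff)
  ultimately show ?thesis by simp
qed

text \<open>Rescaling one coordinate of an invertible diagonal to determinant one;
  this is equivariant for the action of the determinant-one torus.\<close>
definition det_normalize :: "'n::finite \<Rightarrow> ('n \<Rightarrow> 'k::field) \<Rightarrow> 'n \<Rightarrow> 'k" where
  "det_normalize a0 x = x(a0 := x a0 / prod x UNIV)"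

lemma prod_det_normalize:
  assumes "\<forall>a. x a \<noteq> 0" shows "prod (det_normalize a0 x) UNIV = 1"
proof -
  have "prod (det_normalize a0 x) UNIV = x a0 / prod x UNIV * prod x (UNIV - {a0})"
    unfolding det_normalize_def by (simp add: prod_if_point)
  also have "\<dots> = (x a0 * prod x (UNIV - {a0})) / prod x UNIV" by simp
  also have "x a0 * prod x (UNIV - {a0}) = prod x UNIV"
    by (rule prod.remove[symmetric]) auto
  finally show ?thesis using assms by simp
qed

lemma det_normalize_mult:
  assumes "prod \<sigma> UNIV = 1"
  shows "det_normalize a0 (\<lambda>a. \<sigma> a * x a) = (\<lambda>a. \<sigma> a * det_normalize a0 x a)"
  using assms by (auto simp: det_normalize_def prod.distrib fun_eq_iff)

text \<open>The sum \<open>Y\<^sub>0\<close> of the values of \<open>f\<close> over the torus (projected to determinant one)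
  satisfies \<open>\<sigma> \<cdot> Y\<^sub>0 = Y\<^sub>0 - N f(\<sigma>)\<close> for \<open>\<sigma>\<close> in the determinant-one torus, \<open>N\<close> being the
  order of the torus: multiplication by \<open>\<sigma>\<close> permutes the torus.\<close>
lemma torus_sum_translate:
  fixes H :: "('k::{field,finite}^'n::finite^'n) set" and f
  defines "D \<equiv> {x :: 'n \<Rightarrow> 'k. \<forall>a. x a \<noteq> 0}"
  assumes H: "is_subgroup_GL H" and SLH: "SL \<subseteq> H" and f: "pgl_cocycle H f"
    and p: "prod \<sigma> UNIV = 1"
  shows "pgl_eq (adj (diag_mat \<sigma>) (\<Sum>x\<in>D. f (diag_mat (det_normalize a0 x))))
    ((\<Sum>x\<in>D. f (diag_mat (det_normalize a0 x))) - mat (of_nat (card D)) ** f (diag_mat \<sigma>))"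
proof -
  let ?d = "\<lambda>x. diag_mat (det_normalize a0 x) :: 'k^'n^'n" and ?s = "diag_mat \<sigma>"
  have sH: "?s \<in> H" using SLH p by (auto simp: diag_mat_in_SL)
  have nz: "\<sigma> a \<noteq> 0" for a using prod_one_nonzero[OF p] .
  have each: "pgl_eq (adj ?s (f (?d x))) (f (?d (\<lambda>a. \<sigma> a * x a)) - f ?s)" if x: "x \<in> D" for x
  proof -
    have "?d x \<in> H" using x SLH by (auto simp: D_def diag_mat_in_SL prod_det_normalize)
    then have "pgl_eq (f (?s ** ?d x)) (f ?s + adj ?s (f (?d x)))" using cocycle_mult[OF f sH] by blast
    from pgl_eq_diff[OF this pgl_eq_refl[of "f ?s"]]
    have "pgl_eq (f (?s ** ?d x) - f ?s) (adj ?s (f (?d x)))" by simp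
    then show ?thesis by (simp add: diag_mat_mult det_normalize_mult[OF p] pgl_eq_sym)
  qed
  have reindex: "(\<Sum>x\<in>D. f (?d (\<lambda>a. \<sigma> a * x a))) = (\<Sum>x\<in>D. f (?d x))"
    by (rule sum.reindex_bij_witness[of _ "\<lambda>x a. inverse (\<sigma> a) * x a" "\<lambda>x a. \<sigma> a * x a"])
       (auto simp: D_def nz fun_eq_iff)
  have const: "(\<Sum>x\<in>D. f ?s) = mat (of_nat (card D)) ** f ?s"
    by (simp add: vec_eq_iff scalar_mult_left del: sum_constant) (simp add: sum_constant)
  have "adj ?s (\<Sum>x\<in>D. f (?d x)) = (\<Sum>x\<in>D. adj ?s (f (?d x)))" by (rule adj_sum)
  moreover have "pgl_eq (\<Sum>x\<in>D. adj ?s (f (?d x))) (\<Sum>x\<in>D. f (?d (\<lambda>a. \<sigma> a * x a)) - f ?s)"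
    by (rule pgl_eq_sum) (simp add: each)
  moreover have "(\<Sum>x\<in>D. f (?d (\<lambda>a. \<sigma> a * x a)) - f ?s) = (\<Sum>x\<in>D. f (?d x)) - mat (of_nat (card D)) ** f ?s"
    by (simp only: sum_subtractf reindex const)
  ultimately show ?thesis by (simp only:)
qed

lemma averaged_coboundary:
  fixes Y0 :: "'a::field^'n::finite^'n"
  assumes N: "N \<noteq> 0" and eq: "pgl_eq (adj g Y0) (Y0 - mat N ** f g)"
  shows "pgl_eq (cob_shift f (mat (- inverse N) ** Y0) g) 0"
proof -
  let ?Y = "mat (- inverse N) ** Y0"
  have "adj g ?Y - ?Y = mat (- inverse N) ** (adj g Y0 - Y0)"
    by (simp add: adj_scalar_mult matrix_diff_ldistrib)
  moreover have "pgl_eq (mat (- inverse N) ** (adj g Y0 - Y0)) (mat (- inverse N) ** (Y0 - mat N ** f g - Y0))"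
    by (rule pgl_eq_scalar_mult[OF pgl_eq_diff[OF eq pgl_eq_refl]])
  moreover have "mat (- inverse N) ** (Y0 - mat N ** f g - Y0) = f g"
    using N by (simp add: vec_eq_iff scalar_mult_left)
  ultimately have "pgl_eq (adj g ?Y - ?Y) (f g)" by simp
  from pgl_eq_diff[OF pgl_eq_refl[of "f g"] this] show ?thesis by (simp add: cob_shift_def)
qed

text \<open>Step 1. The order of the torus of \<open>GL\<^sub>n(k)\<close> is \<open>(q-1)\<^sup>n\<close>, a unit in \<open>k\<close>; averaging the
  cocycle over it shows that the restriction of any cocycle to the diagonal matrices of
  determinant one is a coboundary.\<close>
lemma torus_averaging:
  fixes H :: "('k::{field,finite}^'n::finite^'n) set" and f
  assumes H: "is_subgroup_GL H" and SLH: "SL \<subseteq> H" and f: "pgl_cocycle H f"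
  shows "\<exists>Y. \<forall>\<sigma>. prod \<sigma> UNIV = 1 \<longrightarrow> pgl_eq (cob_shift f Y (diag_mat \<sigma>)) 0"
proof -
  fix a0 :: 'n
  define D where "D = {x :: 'n \<Rightarrow> 'k. \<forall>a. x a \<noteq> 0}"
  define N :: 'k where "N = of_nat (card D)"
  define Y0 where "Y0 = (\<Sum>x\<in>D. f (diag_mat (det_normalize a0 x)))"
  have N0: "N \<noteq> 0" unfolding N_def D_def card_nonzero_vectors by simp
  have "pgl_eq (adj (diag_mat \<sigma>) Y0) (Y0 - mat N ** f (diag_mat \<sigma>))" if "prod \<sigma> UNIV = 1" for \<sigma>
    using torus_sum_translate[OF H SLH f that, of a0] unfolding D_def N_def Y0_def .
  then show ?thesis using averaged_coboundary[OF N0] by blast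
qed

subsection \<open>Step 2: a single root subgroup\<close>

locale torus_trivial_cocycle =
  fixes H :: "('k::{field,finite}^'n::finite^'n) set" and f :: "'k^'n^'n \<Rightarrow> 'k^'n^'n"
  assumes H: "is_subgroup_GL H" and SL_sub: "SL \<subseteq> H" and f: "pgl_cocycle H f"
    and torus: "\<And>x. prod x UNIV = 1 \<Longrightarrow> pgl_eq (f (diag_mat x)) 0"
    and card: "CARD('k) > 7"

context torus_trivial_cocycle
begin

lemma transv_in_H: "i \<noteq> j \<Longrightarrow> transv i j s \<in> H"
  using transv_in_SL SL_sub by blast

end

locale root_pair = torus_trivial_cocycle H f
  for H :: "('k::{field,finite}^'n::finite^'n) set" and f +
  fixes i j :: 'n
  assumes ij: "i \<noteq> j"
begin

abbreviation "phi s \<equiv> f (transv i j s)"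

lemma phi_add: "pgl_eq (phi (s + r)) (phi s + adj (transv i j s) (phi r))"
  using cocycle_mult[OF f transv_in_H[OF ij] transv_in_H[OF ij]] by (simp add: transv_mult ij)

lemma torus_conj_transv:
  assumes "\<And>a. x a \<noteq> 0"
  shows "diag_mat x ** transv i j s ** matrix_inv (diag_mat x) = transv i j (x i * s * inverse (x j))"
  using assms ij
  by (auto simp: vec_eq_iff matrix_inv_diag_mat diag_mat_mult_left diag_mat_mult_right transv_entry)

lemma phi_torus:
  assumes p: "prod x UNIV = 1"
  shows "pgl_eq (phi (x i * s * inverse (x j))) (adj (diag_mat x) (phi s))"
proof -
  have nz: "x a \<noteq> 0" for a using prod_one_nonzero[OF p] .
  have gH: "diag_mat x \<in> H" using SL_sub p by (auto simp: diag_mat_in_SL)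
  let ?c = "diag_mat x ** transv i j s ** matrix_inv (diag_mat x)"
  have ic: "invertible ?c"
    using subgroup_invertible[OF H] subgroup_mult[OF H] subgroup_inv[OF H] gH transv_in_H[OF ij] by metis
  have A: "pgl_eq (f ?c) (f (diag_mat x) + adj (diag_mat x) (phi s) - adj ?c (f (diag_mat x)))"
    using cocycle_conj[OF H f gH transv_in_H[OF ij]] .
  have B: "pgl_eq (f (diag_mat x) + adj (diag_mat x) (phi s) - adj ?c (f (diag_mat x)))
       (0 + adj (diag_mat x) (phi s) - adj ?c 0)"
    by (intro pgl_eq_diff pgl_eq_add torus[OF p] pgl_eq_refl pgl_eq_adj[OF ic])
  show ?thesis using pgl_eq_trans[OF A B] by (simp add: torus_conj_transv nz adj_zero)
qed

lemma upper_add: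
  "phi (s + r) $ i $ j = phi s $ i $ j + phi r $ i $ j - s * (phi r $ i $ i - phi r $ j $ j) - s * s * phi r $ j $ i"
  using pgl_eq_offdiag[OF phi_add[of s r], of i j] ij by (simp add: adj_transv_entry algebra_simps)

lemma diag_add:
  assumes "a \<noteq> j"
  shows "phi (s + r) $ a $ a - phi (s + r) $ j $ j =
    (phi s $ a $ a - phi s $ j $ j) + (phi r $ a $ a - phi r $ j $ j) + (if a = i then 2 else 1) * s * phi r $ j $ i"
  using pgl_eq_diag[OF phi_add[of s r], of a j] ij assms by (auto simp: adj_transv_entry algebra_simps)

lemma phi_torus_offdiag:
  assumes p: "prod x UNIV = 1" and ab: "a \<noteq> b"
  shows "phi (x i * s * inverse (x j)) $ a $ b = x a * phi s $ a $ b * inverse (x b)"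
  using pgl_eq_offdiag[OF phi_torus[OF p] ab] by (simp add: adj_diag_mat_entry prod_one_nonzero[OF p])

lemma phi_torus_diag:
  assumes p: "prod x UNIV = 1"
  shows "phi (x i * s * inverse (x j)) $ a $ a - phi (x i * s * inverse (x j)) $ b $ b
    = phi s $ a $ a - phi s $ b $ b"
  using pgl_eq_diag[OF phi_torus[OF p, of s], of a b] prod_one_nonzero[OF p]
  by (simp add: adj_diag_mat_entry field_simps)

lemma lower_torus: "c \<noteq> 0 \<Longrightarrow> phi (c * c * s) $ j $ i = inverse c * phi s $ j $ i * inverse c"
  using phi_torus_offdiag[OF prod_torus_pair[OF ij], of c j i s] ij
  by (simp add: torus_pair_apply algebra_simps)

lemma upper_torus: "c \<noteq> 0 \<Longrightarrow> phi (c * c * s) $ i $ j = c * c * phi s $ i $ j"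
  using phi_torus_offdiag[OF prod_torus_pair[OF ij], of c i j s] ij
  by (simp add: torus_pair_apply algebra_simps)

lemma diag_torus: "c \<noteq> 0 \<Longrightarrow> phi (c * c * s) $ a $ a - phi (c * c * s) $ j $ j = phi s $ a $ a - phi s $ j $ j"
  using phi_torus_diag[OF prod_torus_pair[OF ij], of c s a j] ij
  by (simp add: torus_pair_apply algebra_simps)

text \<open>Torus elements with equal \<open>i\<close>- and \<open>j\<close>-coordinates centralise the root
  subgroup; they force every entry of \<open>phi s\<close> on which they act nontrivially to vanish.\<close>
lemma entry_zero_by_centralizer:
  fixes x :: "'n \<Rightarrow> 'k"
  assumes p: "prod x UNIV = 1" and xij: "x i = x j" and ab: "a \<noteq> b" and r: "x a * inverse (x b) \<noteq> 1"
  shows "phi s $ a $ b = 0"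
proof -
  have "x j \<noteq> 0" using prod_one_nonzero[OF p] .
  then have e: "x i * s * inverse (x j) = s" using xij by (simp add: field_simps)
  have "phi s $ a $ b = x a * phi s $ a $ b * inverse (x b)"
    using phi_torus_offdiag[OF p ab, of s] unfolding e .
  then have "phi s $ a $ b * (1 - x a * inverse (x b)) = 0" by (simp add: algebra_simps)
  then show ?thesis using r by simp
qed

definition centralizer_elem :: "'n \<Rightarrow> 'k \<Rightarrow> 'n \<Rightarrow> 'k" where
  "centralizer_elem a d = (\<lambda>_. 1)(i := d, j := d, a := inverse (d * d))"

lemma centralizer_elem_props:
  assumes "a \<noteq> i" "a \<noteq> j" "d \<noteq> 0"
  shows "prod (centralizer_elem a d) UNIV = 1" "centralizer_elem a d i = d" "centralizer_elem a d j = d"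
    "centralizer_elem a d a = inverse (d * d)" "b \<noteq> i \<Longrightarrow> b \<noteq> j \<Longrightarrow> b \<noteq> a \<Longrightarrow> centralizer_elem a d b = 1"
proof -
  have "prod (centralizer_elem a d) UNIV = inverse (d * d) * (d * d)"
    using assms ij by (simp add: centralizer_elem_def prod_if_point)
  then show "prod (centralizer_elem a d) UNIV = 1" using assms(3) by (simp add: field_simps)
qed (use assms in \<open>simp_all add: centralizer_elem_def\<close>)

text \<open>Entries of \<open>phi s\<close> outside positions \<open>(i,j)\<close>, \<open>(j,i)\<close> and the diagonal vanish:
  a suitable centralising torus element scales them by \<open>d\<^sup>2\<close> or \<open>d\<^sup>3\<close>, where \<open>d\<^sup>6 \<noteq> 1\<close>.\<close>
lemma other_entries_zero:
  assumes ab: "a \<noteq> b" and not_ij: "\<not> (a = i \<and> b = j)" and not_ji: "\<not> (a = j \<and> b = i)"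
  shows "phi s $ a $ b = 0"
proof -
  obtain d :: 'k where d: "d \<noteq> 0" "d ^ 6 \<noteq> 1" using exists_non_root_of_unity[where 'k='k, of 6] card by auto
  have "d ^ 6 = (d ^ 2) ^ 3" "d ^ 6 = (d ^ 3) ^ 2" by (simp_all flip: power_mult)
  then have d2: "d * d \<noteq> 1" and d3: "d * d * d \<noteq> 1"
    using d(2) by (auto simp: power2_eq_square power3_eq_cube)
  show ?thesis
  proof (cases "a = i \<or> a = j")
    case False
    then have a: "a \<noteq> i" "a \<noteq> j" by auto
    have dinv: "inverse d \<noteq> 0" using d(1) by simp
    let ?x = "centralizer_elem a (inverse d)"
    note x = centralizer_elem_props[OF a dinv]
    have "?x a * inverse (?x b) \<noteq> 1"
    proof (cases "b = i \<or> b = j")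
      case True
      then have "?x a * inverse (?x b) = d * d * d" using x by auto
      then show ?thesis using d3 by simp
    next
      case False
      then have "?x a * inverse (?x b) = d * d" using x ab by auto
      then show ?thesis using d2 by simp
    qed
    moreover have "?x i = ?x j" using x by simp
    ultimately show ?thesis using entry_zero_by_centralizer[OF x(1)] ab by blast
  next
    case True
    then have b: "b \<noteq> i" "b \<noteq> j" using ab not_ij not_ji by auto
    let ?x = "centralizer_elem b d"
    note x = centralizer_elem_props[OF b d(1)]
    have "?x a * inverse (?x b) = d * d * d" using x True by auto
    then have "?x a * inverse (?x b) \<noteq> 1" using d3 by simp
    moreover have "?x i = ?x j" using x by simp
    ultimately show ?thesis using entry_zero_by_centralizer[OF x(1)] ab by blast
  qed
qed

text \<open>The lower entry \<open>\<gamma>(s) = phi(s)\<^sub>j\<^sub>i\<close> vanishes. In odd characteristic \<open>\<gamma>\<close> is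
  linear, in characteristic 2 quadratic; either contradicts \<open>\<gamma>(c\<^sup>2) = c\<^sup>-\<^sup>2\<gamma>(1)\<close>.\<close>
lemma lower_linear:
  assumes "(2::'k) \<noteq> 0" shows "phi s $ j $ i = s * phi 1 $ j $ i"
proof -
  let ?D = "\<lambda>s. phi s $ i $ i - phi s $ j $ j"
  have "?D (s + 1) = ?D s + ?D 1 + 2 * s * phi 1 $ j $ i" using diag_add[of i s 1] ij by simp
  moreover have "?D (s + 1) = ?D 1 + ?D s + 2 * phi s $ j $ i"
    using diag_add[of i 1 s] ij unfolding add.commute[of 1 s] by simp
  ultimately have "?D 1 + ?D s + 2 * s * phi 1 $ j $ i = ?D 1 + ?D s + 2 * phi s $ j $ i"
    by (simp add: ac_simps)
  then have "2 * s * phi 1 $ j $ i = 2 * phi s $ j $ i" by (rule add_left_imp_eq)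
  then show ?thesis using assms by simp
qed

lemma lower_quadratic:
  assumes char2: "(2::'k) = 0" shows "phi s $ j $ i = s * s * phi 1 $ j $ i"
proof -
  let ?D = "\<lambda>s. phi s $ i $ i - phi s $ j $ j"
  have "Modules.additive ?D"
    by unfold_locales (use diag_add[of i] ij char2 in simp)
  then have D0: "?D s = 0" for s
    using additive_square_invariant_zero[of ?D s] diag_torus[of _ _ i] card by simp
  have "s * s * phi r $ j $ i = r * r * phi s $ j $ i" for r
    using upper_add[of s r] upper_add[of r s] D0 by (simp add: algebra_simps)
  from this[of 1] show ?thesis by simp
qed

lemma lower_zero: "phi s $ j $ i = 0"
proof (cases "(2::'k) = 0")
  case False
  obtain c :: 'k where c: "c \<noteq> 0" "c ^ (2 + 2) \<noteq> 1"
    using exists_non_root_of_unity[where 'k='k, of 4] card by auto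
  have "c ^ 2 * phi 1 $ j $ i = phi (c * c * 1) $ j $ i"
    unfolding lower_linear[OF False, of "c * c * 1"] by (simp add: power2_eq_square)
  also have "\<dots> = inverse c * phi 1 $ j $ i * inverse c" by (rule lower_torus[OF c(1)])
  finally have "c ^ 2 * phi 1 $ j $ i = inverse c * phi 1 $ j $ i * inverse c" .
  then have "phi 1 $ j $ i = 0" by (rule torus_weight_zero[OF c])
  then show ?thesis using lower_linear[OF False, of s] by simp
next
  case True
  obtain c :: 'k where c: "c \<noteq> 0" "c ^ (4 + 2) \<noteq> 1"
    using exists_non_root_of_unity[where 'k='k, of 6] card by auto
  have "c ^ 4 * phi 1 $ j $ i = phi (c * c * 1) $ j $ i"
    unfolding lower_quadratic[OF True, of "c * c * 1"] by (simp add: power4_eq_xxxx mult.assoc)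
  also have "\<dots> = inverse c * phi 1 $ j $ i * inverse c" by (rule lower_torus[OF c(1)])
  finally have "c ^ 4 * phi 1 $ j $ i = inverse c * phi 1 $ j $ i * inverse c" .
  then have "phi 1 $ j $ i = 0" by (rule torus_weight_zero[OF c])
  then show ?thesis using lower_quadratic[OF True, of s] by simp
qed

text \<open>All diagonal entries of \<open>phi s\<close> coincide: the differences are additive and
  invariant under squares.\<close>
lemma diag_const: "phi s $ a $ a = phi s $ j $ j"
proof (cases "a = j")
  case False
  let ?D = "\<lambda>s. phi s $ a $ a - phi s $ j $ j"
  have "Modules.additive ?D"
    by unfold_locales (use diag_add[OF False] lower_zero in simp)
  then show ?thesis
    using additive_square_invariant_zero[of ?D s] diag_torus card by simp
qed simp

text \<open>The upper entry is additive and homogeneous for squares, hence linear.\<close>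
lemma upper_linear: "phi s $ i $ j = s * phi 1 $ i $ j"
proof -
  let ?b = "\<lambda>s. phi s $ i $ j"
  have "Modules.additive ?b"
  proof
    fix s r
    show "?b (s + r) = ?b s + ?b r"
      using upper_add[of s r] lower_zero[of r] diag_const[of r i] by simp
  qed
  then show ?thesis
    by (rule additive_square_homogeneous_linear) (rule upper_torus)
qed

lemma root_form: "pgl_eq (phi s) (unit_mat i j (phi 1 $ i $ j * s))"
proof -
  have "phi s $ a $ b = unit_mat i j (phi 1 $ i $ j * s) $ a $ b" if "a \<noteq> b" for a b
    using that upper_linear[of s] lower_zero[of s] other_entries_zero[OF that] ij by (auto simp: mult.commute)
  moreover have "phi s $ a $ a = phi s $ b $ b" for a b
    using diag_const[of s a] diag_const[of s b] by simp
  ultimately show ?thesis using ij by (auto simp: pgl_eq_iff)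
qed

end

subsection \<open>Step 3: relations between the root coefficients\<close>

lemma transv_conj_transv:
  assumes "i \<noteq> j" "j \<noteq> l" "i \<noteq> l"
  shows "transv i j s ** transv j l r ** matrix_inv (transv i j s) = transv j l r ** (transv i l (s * r) :: 'k::field^'n::finite^'n)"
  unfolding matrix_inv_transv[OF assms(1)] using assms
  by (simp add: transv_def matrix_add_ldistrib matrix_add_rdistrib unit_mat_mult matrix_mul_assoc)
     (auto simp: vec_eq_iff)

text \<open>The monomial matrix \<open>x\<^sub>i\<^sub>j(s) x\<^sub>j\<^sub>i(-s\<^sup>-\<^sup>1) x\<^sub>i\<^sub>j(s)\<close> representing a Weyl group element.\<close>
definition weyl :: "'n::finite \<Rightarrow> 'n \<Rightarrow> 'k::field \<Rightarrow> 'k^'n^'n" where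
  "weyl i j s = mat 1 - unit_mat i i 1 - unit_mat j j 1 + unit_mat i j s + unit_mat j i (- inverse s)"

lemma transv_product_weyl:
  assumes "i \<noteq> j" "s \<noteq> 0"
  shows "transv i j s ** transv j i (- inverse s) ** transv i j s = (weyl i j s :: 'k::field^'n::finite^'n)"
  using assms
  by (simp add: weyl_def transv_def matrix_add_ldistrib matrix_add_rdistrib unit_mat_mult matrix_mul_assoc)
     (auto simp: vec_eq_iff field_simps)

lemma weyl_torus:
  assumes "i \<noteq> j" "s \<noteq> 0"
  shows "weyl i j s = weyl i j 1 ** diag_mat (torus_pair j i (s :: 'k::field) :: 'n::finite \<Rightarrow> 'k)"
  using assms by (auto simp: vec_eq_iff weyl_def diag_mat_mult_right torus_pair_def)

lemma adj_diag_mat_scalar: "(\<And>a. y a \<noteq> 0) \<Longrightarrow> adj (diag_mat y) (diag_mat x) = diag_mat x"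
  by (auto simp: vec_eq_iff adj_diag_mat_entry)

lemma adj_transv_diag_mat:
  "i \<noteq> j \<Longrightarrow> adj (transv i j s) (diag_mat x) - diag_mat x = unit_mat i j (s * (x j - x i))"
  by (auto simp: vec_eq_iff adj_transv_entry algebra_simps)

context torus_trivial_cocycle
begin

lemma root_pairI: "i \<noteq> j \<Longrightarrow> root_pair H f i j"
  by (rule root_pair.intro[OF torus_trivial_cocycle_axioms]) (simp add: root_pair_axioms_def)

definition root_coeff :: "'n \<Rightarrow> 'n \<Rightarrow> 'k" where
  "root_coeff i j = f (transv i j 1) $ i $ j"

lemma root_coeff_form: "i \<noteq> j \<Longrightarrow> pgl_eq (f (transv i j s)) (unit_mat i j (root_coeff i j * s))"
  using root_pair.root_form[OF root_pairI] by (simp add: root_coeff_def)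


text \<open>Step 3a: the commutator relation makes \<open>b\<close> additive along paths: \<open>b\<^sub>i\<^sub>l = b\<^sub>i\<^sub>j + b\<^sub>j\<^sub>l\<close>.\<close>
lemma root_coeff_additive:
  assumes ij: "i \<noteq> j" and jl: "j \<noteq> l" and il: "i \<noteq> l"
  shows "root_coeff i l = root_coeff i j + root_coeff j l"
proof -
  let ?u = "transv i j 1 :: 'k^'n^'n" and ?v = "transv j l 1 :: 'k^'n^'n" and ?w = "transv i l 1 :: 'k^'n^'n"
  let ?E = "\<lambda>i j. unit_mat i j (root_coeff i j * 1) :: 'k^'n^'n"
  have uH: "?u \<in> H" and vH: "?v \<in> H" and wH: "?w \<in> H" using transv_in_H ij jl il by auto
  have iu: "invertible ?u" "invertible ?v" "invertible ?w" using invertible_transv ij jl il by auto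
  have ivw: "invertible (?v ** ?w)" using invertible_mult iu by blast
  have eq: "?u ** ?v ** matrix_inv ?u = ?v ** ?w" using transv_conj_transv[OF ij jl il, of 1 1] by simp
  have "pgl_eq (f (?v ** ?w)) (f ?u + adj ?u (f ?v) - adj (?v ** ?w) (f ?u))"
    using cocycle_conj[OF H f uH vH] unfolding eq .
  moreover have "pgl_eq (f ?u + adj ?u (f ?v) - adj (?v ** ?w) (f ?u))
     (?E i j + adj ?u (?E j l) - adj (?v ** ?w) (?E i j))"
    by (intro pgl_eq_diff pgl_eq_add root_coeff_form pgl_eq_adj iu ivw ij jl)
  moreover have "pgl_eq (f (?v ** ?w)) (f ?v + adj ?v (f ?w))" using cocycle_mult[OF f vH wH] .
  moreover have "pgl_eq (f ?v + adj ?v (f ?w)) (?E j l + adj ?v (?E i l))"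
    by (intro pgl_eq_add root_coeff_form pgl_eq_adj iu jl il)
  ultimately have "pgl_eq (?E i j + adj ?u (?E j l) - adj (?v ** ?w) (?E i j)) (?E j l + adj ?v (?E i l))"
    by (meson pgl_eq_sym pgl_eq_trans)
  from pgl_eq_offdiag[OF this il] have "root_coeff j l + root_coeff i j = root_coeff i l"
    using ij jl il by (simp add: adj_transv_entry adj_mult iu)
  then show ?thesis by (simp add: add.commute)
qed

lemma cocycle_weyl:
  assumes ij: "i \<noteq> j" and s: "s \<noteq> 0"
  shows "pgl_eq (f (weyl i j s))
    (unit_mat i j (root_coeff i j * s) + adj (transv i j s) (unit_mat j i (root_coeff j i * - inverse s))
      + adj (transv i j s) (adj (transv j i (- inverse s)) (unit_mat i j (root_coeff i j * s))))"
proof -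
  have ji: "j \<noteq> i" using ij by simp
  let ?A = "transv i j s :: 'k^'n^'n" and ?B = "transv j i (- inverse s) :: 'k^'n^'n"
  have AH: "?A \<in> H" and BH: "?B \<in> H" using transv_in_H ij ji by auto
  have iA: "invertible ?A" "invertible ?B" using invertible_transv ij ji by blast+
  have e: "weyl i j s = ?A ** (?B ** ?A)" using transv_product_weyl[OF ij s] by (simp add: matrix_mul_assoc)
  have "pgl_eq (f (?A ** (?B ** ?A))) (f ?A + adj ?A (f (?B ** ?A)))"
    using cocycle_mult[OF f AH subgroup_mult[OF H BH AH]] .
  also have "pgl_eq \<dots> (f ?A + adj ?A (f ?B + adj ?B (f ?A)))"
    by (intro pgl_eq_add pgl_eq_refl pgl_eq_adj iA cocycle_mult[OF f BH AH])
  also have "pgl_eq \<dots> (unit_mat i j (root_coeff i j * s) + adj ?A (unit_mat j i (root_coeff j i * - inverse s)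
      + adj ?B (unit_mat i j (root_coeff i j * s))))"
    by (intro pgl_eq_add pgl_eq_adj iA root_coeff_form ij ji)
  finally show ?thesis unfolding e by (simp add: adj_add add.assoc)
qed

text \<open>The Weyl elements \<open>weyl i j s\<close> differ by torus elements, on which \<open>f\<close> vanishes.\<close>
lemma cocycle_weyl_const:
  assumes ij: "i \<noteq> j" and s: "s \<noteq> 0"
  shows "pgl_eq (f (weyl i j s)) (f (weyl i j 1))"
proof -
  have W1H: "weyl i j 1 \<in> H"
    using transv_product_weyl[OF ij, of 1] transv_in_H ij subgroup_mult[OF H] by (metis one_neq_zero)
  have p: "prod (torus_pair j i s) UNIV = 1" using prod_torus_pair[of j i s] ij s by auto
  have hH: "diag_mat (torus_pair j i s) \<in> H" using SL_sub p by (auto simp: diag_mat_in_SL)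
  have "pgl_eq (f (weyl i j s)) (f (weyl i j 1) + adj (weyl i j 1) (f (diag_mat (torus_pair j i s))))"
    unfolding weyl_torus[OF ij s] using cocycle_mult[OF f W1H hH] .
  also have "pgl_eq \<dots> (f (weyl i j 1) + adj (weyl i j 1) 0)"
    by (intro pgl_eq_add pgl_eq_refl pgl_eq_adj subgroup_invertible[OF H W1H] torus p)
  finally show ?thesis by (simp add: adj_zero)
qed

text \<open>Step 3b: \<open>b\<^sub>j\<^sub>i = - b\<^sub>i\<^sub>j\<close>, read off from the \<open>(i,j)\<close>-entry of \<open>f(weyl i j s)\<close>,
  which equals \<open>s (b\<^sub>i\<^sub>j + b\<^sub>j\<^sub>i)\<close> but does not depend on \<open>s\<close>.\<close>
lemma root_coeff_antisym:
  assumes ij: "i \<noteq> j"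
  shows "root_coeff j i = - root_coeff i j"
proof -
  have entry: "f (weyl i j s) $ i $ j = s * (root_coeff i j + root_coeff j i)" if s: "s \<noteq> 0" for s
    using pgl_eq_offdiag[OF cocycle_weyl[OF ij s] ij] ij s by (simp add: adj_transv_entry field_simps)
  obtain c :: 'k where c: "c \<noteq> 0" "c ^ 1 \<noteq> 1" using exists_non_root_of_unity[where 'k='k, of 1] card by auto
  have "f (weyl i j c) $ i $ j = f (weyl i j 1) $ i $ j"
    using pgl_eq_offdiag[OF cocycle_weyl_const[OF ij c(1)] ij] .
  then have "(c - 1) * (root_coeff i j + root_coeff j i) = 0"
    using entry[OF c(1)] entry[of 1] by (simp add: algebra_simps)
  then show ?thesis using c by (simp add: eq_neg_iff_add_eq_0 add.commute)
qed

lemma root_coeff_potential: "\<exists>x. \<forall>i j. i \<noteq> j \<longrightarrow> root_coeff i j = x j - x i"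
proof -
  fix a0 :: 'n
  define x where "x a = (if a = a0 then 0 else root_coeff a0 a)" for a
  have "root_coeff i j = x j - x i" if ij: "i \<noteq> j" for i j
  proof (cases "i = a0")
    case False
    show ?thesis
    proof (cases "j = a0")
      case True then show ?thesis using ij False root_coeff_antisym[of j i] by (simp add: x_def)
    next
      case False
      then show ?thesis using root_coeff_additive[of a0 i j] ij \<open>i \<noteq> a0\<close> by (simp add: x_def)
    qed
  qed (use ij in \<open>simp add: x_def\<close>)
  then show ?thesis by blast
qed

text \<open>Step 3c: subtracting the coboundary of \<open>diag(x)\<close>, where \<open>b\<^sub>i\<^sub>j = x\<^sub>j - x\<^sub>i\<close>, the
  cocycle becomes trivial on all transvections while staying trivial on the torus.\<close>
lemma root_normalization:
  "\<exists>X. (\<forall>i j s. i \<noteq> j \<longrightarrow> pgl_eq (cob_shift f X (transv i j s)) 0) \<and>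
       (\<forall>y. prod y UNIV = 1 \<longrightarrow> pgl_eq (cob_shift f X (diag_mat y)) 0)"
proof -
  obtain x where x: "\<And>i j. i \<noteq> j \<Longrightarrow> root_coeff i j = x j - x i" using root_coeff_potential by blast
  have "pgl_eq (cob_shift f (diag_mat x) (transv i j s)) 0" if ij: "i \<noteq> j" for i j s
  proof -
    have "pgl_eq (cob_shift f (diag_mat x) (transv i j s))
        (unit_mat i j (root_coeff i j * s) - unit_mat i j (s * (x j - x i)))"
      unfolding cob_shift_def adj_transv_diag_mat[OF ij] by (rule pgl_eq_diff[OF root_coeff_form[OF ij] pgl_eq_refl])
    then show ?thesis using x[OF ij] by (simp add: mult.commute)
  qed
  moreover have "pgl_eq (cob_shift f (diag_mat x) (diag_mat y)) 0" if "prod y UNIV = 1" for y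
    using torus[OF that] prod_one_nonzero[OF that] by (simp add: cob_shift_def adj_diag_mat_scalar)
  ultimately show ?thesis by blast
qed

end

subsection \<open>Step 4: generation of \<open>SL\<^sub>n(k)\<close> by row operations\<close>

definition row_step :: "'a::field^'n::finite^'n \<Rightarrow> 'a^'n^'n \<Rightarrow> bool" where
  "row_step A B \<longleftrightarrow> (\<exists>i j s. i \<noteq> j \<and> B = transv i j s ** A)"

lemma row_steps_det: "row_step\<^sup>*\<^sup>* A B \<Longrightarrow> det B = det A"
  by (induction rule: rtranclp_induct) (auto simp: row_step_def det_mul det_transv)

definition cleared :: "'n set \<Rightarrow> 'a::field^'n::finite^'n \<Rightarrow> bool" where
  "cleared K B \<longleftrightarrow> (\<forall>k\<in>K. \<forall>m. m \<noteq> k \<longrightarrow> B$m$k = 0)"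

lemma invertible_kernel:
  fixes A :: "'a::field^'n::finite^'n"
  assumes "invertible A" "A *v v = 0" shows "v = 0"
proof -
  obtain B where "B ** A = mat 1" using assms(1) by (auto simp: invertible_def)
  then have "v = B *v (A *v v)" by (simp add: matrix_vector_mul_assoc)
  then show ?thesis using assms(2) by simp
qed

text \<open>In an invertible matrix whose columns in \<open>K\<close> are cleared, the cleared columns
  have nonzero diagonal entries, and no further column is supported in the rows \<open>K\<close>
  (otherwise it would be a combination of the cleared columns).\<close>
lemma cleared_diag_nonzero:
  fixes B :: "'a::field^'n::finite^'n"
  assumes inv: "invertible B" and cl: "cleared K B" and k: "k \<in> K"
  shows "B$k$k \<noteq> 0"
proof
  assume "B$k$k = 0"
  then have "B *v axis k 1 = 0"
    using cl k by (auto simp: vec_eq_iff matrix_vector_mult_def axis_def cleared_def if_distrib cong: if_cong)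
  then show False using invertible_kernel[OF inv] by (metis axis_eq_0_iff one_neq_zero)
qed

lemma column_outside_cleared_rows:
  fixes B :: "'a::field^'n::finite^'n"
  assumes inv: "invertible B" and cl: "cleared K B" and l: "l \<notin> K"
  shows "\<exists>m. m \<notin> K \<and> B$m$l \<noteq> 0"
proof (rule ccontr)
  assume none: "\<nexists>m. m \<notin> K \<and> B$m$l \<noteq> 0"
  note diag = cleared_diag_nonzero[OF inv cl]
  define v :: "'a^'n" where "v = (\<chi> b. if b = l then 1 else if b \<in> K then - (B$b$l / B$b$b) else 0)"
  have "(B *v v) $ a = 0" for a
  proof -
    have "B$a$b * v$b = (if a \<in> K then (if b = l then B$a$l else 0) - (if b = a then B$a$l else 0) else 0)" for b
      using none cl diag l unfolding v_def cleared_def by (auto; metis)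
    then have "(B *v v) $ a = (\<Sum>b\<in>UNIV. if a \<in> K then (if b = l then B$a$l else 0) - (if b = a then B$a$l else 0) else 0)"
      by (simp add: matrix_vector_mult_def)
    then show ?thesis by (cases "a \<in> K") (simp_all add: sum_subtractf)
  qed
  then have "B *v v = 0" by (simp add: vec_eq_iff)
  moreover have "v $ l = 1" by (simp add: v_def)
  then have "v \<noteq> 0" by auto
  ultimately show False using invertible_kernel[OF inv] by blast
qed

lemma pivot_exists:
  fixes B :: "'a::field^'n::finite^'n"
  assumes inv: "invertible B" and cl: "cleared K B" and l: "l \<notin> K"
  shows "\<exists>B'. row_step\<^sup>*\<^sup>* B B' \<and> cleared K B' \<and> B'$l$l \<noteq> 0"
proof (cases "B$l$l = 0")
  case True
  obtain m where m: "m \<notin> K" "B$m$l \<noteq> 0" using column_outside_cleared_rows[OF inv cl l] by blast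
  with True have ml: "l \<noteq> m" by auto
  let ?B' = "transv l m 1 ** B"
  have "row_step B ?B'" using ml by (auto simp: row_step_def)
  moreover have "cleared K ?B'"
  proof -
    have "B$m$k = 0" if "k \<in> K" for k using cl m(1) that unfolding cleared_def by metis
    then show ?thesis using cl by (auto simp: cleared_def transv_mult_left_entry)
  qed
  moreover have "?B'$l$l \<noteq> 0" using True m by (simp add: transv_mult_left_entry)
  ultimately show ?thesis by blast
qed (use cl in blast)

lemma clear_column:
  fixes B :: "'a::field^'n::finite^'n"
  assumes cl: "cleared K B" and l: "l \<notin> K" and piv: "B$l$l \<noteq> 0"
  shows "\<exists>B'. row_step\<^sup>*\<^sup>* B B' \<and> cleared (insert l K) B'"
proof -
  have "\<exists>B'. row_step\<^sup>*\<^sup>* B B' \<and> cleared K B' \<and> B'$l$l = B$l$l \<and> (\<forall>m\<in>S. m \<noteq> l \<longrightarrow> B'$m$l = 0)"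
    if "finite S" for S
    using that
  proof (induction S rule: finite_induct)
    case empty
    show ?case using cl by blast
  next
    case (insert m S)
    then obtain B' where B': "row_step\<^sup>*\<^sup>* B B'" "cleared K B'" "B'$l$l = B$l$l"
      "\<forall>m\<in>S. m \<noteq> l \<longrightarrow> B'$m$l = 0" by blast
    show ?case
    proof (cases "m = l")
      case True
      then show ?thesis using B' by blast
    next
      case False
      let ?B'' = "transv m l (- (B'$m$l / B'$l$l)) ** B'"
      have "row_step B' ?B''" using False by (auto simp: row_step_def)
      then have "row_step\<^sup>*\<^sup>* B ?B''" using B'(1) by simp
      moreover have "cleared K ?B''"
      proof -
        have "B'$l$k = 0" if "k \<in> K" for k using B'(2) l that unfolding cleared_def by metis
        then show ?thesis using B'(2) by (auto simp: cleared_def transv_mult_left_entry)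
      qed
      moreover have "?B''$l$l = B$l$l" using B'(3) False by (simp add: transv_mult_left_entry)
      moreover have "\<forall>m'\<in>insert m S. m' \<noteq> l \<longrightarrow> ?B''$m'$l = 0"
        using B'(3,4) piv by (auto simp: transv_mult_left_entry)
      ultimately show ?thesis by blast
    qed
  qed
  from this[of UNIV] obtain B' where "row_step\<^sup>*\<^sup>* B B'" "cleared K B'" "\<forall>m. m \<noteq> l \<longrightarrow> B'$m$l = 0"
    by auto
  then show ?thesis by (auto simp: cleared_def)
qed

lemma row_reduce_to_diagonal:
  fixes A :: "'a::field^'n::finite^'n"
  assumes inv: "invertible A"
  shows "\<exists>D. row_step\<^sup>*\<^sup>* A D \<and> (\<forall>a b. a \<noteq> b \<longrightarrow> D$a$b = 0)"
proof -
  have "\<exists>B. row_step\<^sup>*\<^sup>* A B \<and> cleared K B" if "finite K" for K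
    using that
  proof (induction K rule: finite_induct)
    case empty
    show ?case by (auto simp: cleared_def)
  next
    case (insert l K)
    then obtain B where B: "row_step\<^sup>*\<^sup>* A B" "cleared K B" by blast
    have "invertible B" using inv row_steps_det[OF B(1)] by (simp add: invertible_det_nz)
    then obtain B1 where B1: "row_step\<^sup>*\<^sup>* B B1" "cleared K B1" "B1$l$l \<noteq> 0"
      using pivot_exists B(2) insert(2) by blast
    then obtain B2 where "row_step\<^sup>*\<^sup>* B1 B2" "cleared (insert l K) B2"
      using clear_column insert(2) by blast
    then show ?case using B(1) B1(1) by (meson rtranclp_trans)
  qed
  from this[of UNIV] show ?thesis by (auto simp: cleared_def)
qed

text \<open>Since every transvection is invertible within the transvections, membership
  in a multiplicatively closed set containing them propagates backwards along row
  reduction; so \<open>SL\<^sub>n(k)\<close> is generated by the transvections and the diagonal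
  matrices of determinant one.\<close>
lemma SL_generated:
  fixes G :: "('a::field^'n::finite^'n) set"
  assumes mult: "\<And>A B. A \<in> G \<Longrightarrow> B \<in> G \<Longrightarrow> A ** B \<in> G"
    and transv: "\<And>i j s. i \<noteq> j \<Longrightarrow> transv i j s \<in> G"
    and diag: "\<And>x. prod x UNIV = 1 \<Longrightarrow> diag_mat x \<in> G"
    and det: "det A = 1"
  shows "A \<in> G"
proof -
  obtain D where D: "row_step\<^sup>*\<^sup>* A D" and off: "\<And>a b. a \<noteq> b \<Longrightarrow> D$a$b = 0"
    using row_reduce_to_diagonal[of A] det by (auto simp: invertible_det_nz)
  have "D = diag_mat (\<lambda>a. D$a$a)" using off by (auto simp: vec_eq_iff)
  moreover have "prod (\<lambda>a. D$a$a) UNIV = 1"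
    using det row_steps_det[OF D] det_diagonal[of D] off by simp
  ultimately have "D \<in> G" using diag by metis
  with D show ?thesis
  proof (induction rule: converse_rtranclp_induct)
    case (step B B')
    then obtain i j s where ij: "i \<noteq> j" and B': "B' = transv i j s ** B" by (auto simp: row_step_def)
    have "B = transv i j (- s) ** B'"
      unfolding B' by (simp add: matrix_mul_assoc transv_mult[OF ij] transv_zero)
    then show ?case using mult[OF transv[OF ij] step.IH[OF step.prems]] by simp
  qed
qed

lemma cocycle_vanishes_on_SL:
  fixes f :: "'k::field^'n::finite^'n \<Rightarrow> 'k^'n^'n"
  assumes H: "is_subgroup_GL H" and SL_sub: "SL \<subseteq> H" and f: "pgl_cocycle H f"
    and transv: "\<And>i j s. i \<noteq> j \<Longrightarrow> pgl_eq (f (transv i j s)) 0"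
    and torus: "\<And>x. prod x UNIV = 1 \<Longrightarrow> pgl_eq (f (diag_mat x)) 0"
    and v: "v \<in> SL"
  shows "pgl_eq (f v) 0"
proof -
  let ?G = "{g \<in> SL. pgl_eq (f g) 0}"
  have "v \<in> ?G"
  proof (rule SL_generated)
    fix A B assume A: "A \<in> ?G" and B: "B \<in> ?G"
    then have AH: "A \<in> H" and BH: "B \<in> H" using SL_sub by auto
    have "pgl_eq (f (A ** B)) (f A + adj A (f B))" using cocycle_mult[OF f AH BH] .
    also have "pgl_eq \<dots> (0 + adj A 0)"
      using A B by (intro pgl_eq_add pgl_eq_adj subgroup_invertible[OF H AH]) auto
    finally have "pgl_eq (f (A ** B)) 0" by (simp add: adj_zero)
    moreover have "A ** B \<in> SL" using A B by (auto simp: SL_def det_mul)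
    ultimately show "A ** B \<in> ?G" by simp
  qed (use v transv torus in \<open>auto simp: SL_def det_transv det_diag_mat\<close>)
  then show ?thesis by simp
qed

subsection \<open>Step 5: from \<open>SL\<^sub>n(k)\<close> to \<open>H\<close>\<close>

text \<open>An element of \<open>pgl\<^sub>n(k)\<close> fixed by \<open>SL\<^sub>n(k)\<close> is zero.
  Torus elements kill its off-diagonal entries, transvections equalise its diagonal.\<close>
lemma SL_invariant_zero:
  fixes Z :: "'k::{field,finite}^'n::finite^'n"
  assumes inv: "\<And>v. v \<in> SL \<Longrightarrow> pgl_eq (adj v Z) Z" and card: "CARD('k) > 3"
  shows "pgl_eq Z 0"
proof -
  obtain c :: 'k where c: "c \<noteq> 0" "c ^ 2 \<noteq> 1" using exists_non_root_of_unity[where 'k='k, of 2] card by auto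
  have off: "Z $ a $ b = 0" if ab: "a \<noteq> b" for a b
  proof -
    let ?t = "torus_pair a b c"
    have p: "prod ?t UNIV = 1" by (rule prod_torus_pair[OF ab c(1)])
    have "adj (diag_mat ?t) Z $ a $ b = c * Z $ a $ b * c"
      using prod_one_nonzero[OF p] ab by (simp add: adj_diag_mat_entry torus_pair_apply)
    then have "c * Z $ a $ b * c = Z $ a $ b"
      using pgl_eq_offdiag[OF inv ab] p by (simp add: diag_mat_in_SL)
    then have "Z $ a $ b * (c * c - 1) = 0" by (simp add: algebra_simps)
    moreover have "c * c - 1 \<noteq> 0" using c by (simp add: power2_eq_square)
    ultimately show ?thesis by simp
  qed
  have "Z $ a $ a = Z $ b $ b" for a b
  proof (cases "a = b")
    case False
    then have ab: "a \<noteq> b" .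
    have "Z $ a $ b + Z $ b $ b - Z $ a $ a - Z $ b $ a = Z $ a $ b"
      using pgl_eq_offdiag[OF inv[OF transv_in_SL[OF ab, of 1]] ab] ab by (simp add: adj_transv_entry)
    then show ?thesis using off ab by simp
  qed simp
  then show ?thesis using off by (auto simp: pgl_eq_iff)
qed

lemma SL_conj:
  fixes h v :: "'a::field^'n::finite^'n"
  assumes "invertible h" "v \<in> SL"
  shows "matrix_inv h ** v ** h \<in> SL"
proof -
  have "det (matrix_inv h) * det h = 1"
    using matrix_inv_props(2)[OF assms(1)] by (metis det_I det_mul)
  then show ?thesis using assms(2) by (simp add: SL_def det_mul algebra_simps)
qed

text \<open>Step 5: if a cocycle on \<open>H \<supseteq> SL\<^sub>n(k)\<close> vanishes on \<open>SL\<^sub>n(k)\<close>, the cocycle relation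
  for \<open>h (h\<^sup>-\<^sup>1 v h) h\<^sup>-\<^sup>1 = v\<close> shows that each value \<open>f(h)\<close> is fixed by \<open>SL\<^sub>n(k)\<close>,
  hence zero.\<close>
lemma cocycle_vanishes_on_H:
  fixes f :: "'k::{field,finite}^'n::finite^'n \<Rightarrow> 'k^'n^'n"
  assumes H: "is_subgroup_GL H" and SL_sub: "SL \<subseteq> H" and f: "pgl_cocycle H f"
    and SL0: "\<And>v. v \<in> SL \<Longrightarrow> pgl_eq (f v) 0" and card: "CARD('k) > 3"
    and hH: "h \<in> H"
  shows "pgl_eq (f h) 0"
proof (rule SL_invariant_zero[OF _ card])
  fix v :: "'k^'n^'n" assume vSL: "v \<in> SL"
  have ih: "invertible h" using subgroup_invertible[OF H hH] .
  let ?w = "matrix_inv h ** v ** h"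
  have wSL: "?w \<in> SL" using SL_conj[OF ih vSL] .
  have conj: "h ** ?w ** matrix_inv h = v"
    by (simp add: matrix_mul_assoc matrix_inv_props ih) (simp add: matrix_mul_assoc[symmetric] matrix_inv_props ih)
  have "pgl_eq 0 (f v)" using pgl_eq_sym[OF SL0[OF vSL]] .
  also have "pgl_eq \<dots> (f h + adj h (f ?w) - adj v (f h))"
    using cocycle_conj[OF H f hH SL_sub[THEN subsetD, OF wSL]] unfolding conj .
  also have "pgl_eq \<dots> (f h + adj h 0 - adj v (f h))"
    by (intro pgl_eq_diff pgl_eq_add pgl_eq_refl pgl_eq_adj ih SL0 wSL)
  finally have "pgl_eq (0 + adj v (f h)) (f h - adj v (f h) + adj v (f h))"
    by (intro pgl_eq_add pgl_eq_refl) (simp add: adj_zero)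
  then show "pgl_eq (adj v (f h)) (f h)" by simp
qed

text \<open>Steps 1 to 5 in sequence.\<close>
theorem mainTheorem11:
  fixes H :: "('k::{field,finite} ^'n::finite^'n) set"
  assumes "CARD('n) \<ge> 2"
    and "CARD('k) > 9"
    and "is_subgroup_GL H"
    and "SL \<subseteq> H"
  shows "H1_pgl_vanishes H"
  unfolding H1_pgl_vanishes_def
proof (intro allI impI)
  fix f assume f: "pgl_cocycle H f"
  obtain Y where Y: "\<And>\<sigma>. prod \<sigma> UNIV = 1 \<Longrightarrow> pgl_eq (cob_shift f Y (diag_mat \<sigma>)) 0"
    using torus_averaging[OF assms(3,4) f] by blast
  have "torus_trivial_cocycle H (cob_shift f Y)"
    using assms cob_shift_cocycle[OF assms(3) f] Y by unfold_locales auto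
  then obtain X where
    roots: "\<And>i j s. i \<noteq> j \<Longrightarrow> pgl_eq (cob_shift f (Y + X) (transv i j s)) 0" and
    torus: "\<And>y. prod y UNIV = 1 \<Longrightarrow> pgl_eq (cob_shift f (Y + X) (diag_mat y)) 0"
    using torus_trivial_cocycle.root_normalization by (fastforce simp: cob_shift_cob_shift)
  have cocycle: "pgl_cocycle H (cob_shift f (Y + X))" using cob_shift_cocycle[OF assms(3) f] .
  have "pgl_eq (cob_shift f (Y + X) v) 0" if "v \<in> SL" for v
    using cocycle_vanishes_on_SL[OF assms(3,4) cocycle roots torus that] .
  then have "\<forall>g\<in>H. pgl_eq (cob_shift f (Y + X) g) 0"
    using cocycle_vanishes_on_H[OF assms(3,4) cocycle] assms(2) by auto
  then show "pgl_coboundary H f" by (rule cob_shift_trivial_imp_coboundary)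
qed

end
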